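(* Let ${\bm G}$ be a random matrix in $\mathbb{R}^{m\times n}$ with $\mathbb{E}[{\bm G}]={\bm M}$ and $\mathbb{E}[\|{\bm G}-{\bm M}\|_F^\alpha]\le\sigma^\alpha$ for some $\alpha\in(1,2]$, $\sigma>0$. Let $\tau>0$ and suppose $\|{\bm M}\|_F\le\tau/2$. Then $$\big\|{\bm M}-\mathbb{E}[\mathcal{C}_\tau({\bm G})]\big\|_F^2\le 2^{2\alpha}\,\tau^{-2(\alpha-1)}\sigma^{2\alpha}\le 16\,\tau^{-2(\alpha-1)}\sigma^{2\alpha}.$$
   Context: $\|\cdot\|_F$ is the Frobenius norm. Spectral clipping: for ${\bm G}\in\mathbb{R}^{m\times n}$ with (thin) SVD ${\bm G}={\bm U}\,\mathrm{diag}(\sigma_1,\dots,\sigma_d){\bm V}^\top$, $d=\min\{m,n\}$, and threshold $\tau>0$, define $\mathcal{C}_\tau({\bm G}):={\bm U}\,\mathrm{diag}(\min\{\sigma_1,\tau\},\dots,\min\{\sigma_d,\tau\}){\bm V}^\top$. *)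

theory Defs
  imports "HOL-Probability.Probability"
begin

text \<open>Matrices in R^{m x n} are represented as real^'n^'m (row index 'm, column
index 'n); the norm on this type is the Frobenius norm.\<close>

definition outer_prod :: "real^'m \<Rightarrow> real^'n \<Rightarrow> real^'n^'m" where
  "outer_prod x y = (\<chi> i j. x $ i * y $ j)"

text \<open>Thin SVD G = U diag(s_0,...,s_{d-1}) V^T, d = min m n, written via the columns
u_k of U and v_k of V (orthonormal families) and nonnegative singular values s_k.\<close>
definition is_thin_svd :: "real^'n^'m \<Rightarrow> (nat \<Rightarrow> real^'m) \<Rightarrow> (nat \<Rightarrow> real) \<Rightarrow> (nat \<Rightarrow> real^'n) \<Rightarrow> bool" where
  "is_thin_svd G u s v \<longleftrightarrow>
     (let d = min CARD('m) CARD('n) in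
       (\<forall>i<d. \<forall>j<d. u i \<bullet> u j = (if i = j then 1 else 0)) \<and>
       (\<forall>i<d. \<forall>j<d. v i \<bullet> v j = (if i = j then 1 else 0)) \<and>
       (\<forall>k<d. 0 \<le> s k) \<and>
       G = (\<Sum>k<d. s k *\<^sub>R outer_prod (u k) (v k)))"

definition spec_clip :: "real \<Rightarrow> real^'n^'m \<Rightarrow> real^'n^'m" where
  "spec_clip \<tau> G =
     (case (SOME (u, s, v). is_thin_svd G u s v) of (u, s, v) \<Rightarrow>
        (\<Sum>k<min CARD('m) CARD('n). min (s k) \<tau> *\<^sub>R outer_prod (u k) (v k)))"

end

theory Submission
  imports Defs
begin

text \<open>Clipping moves G only when its Frobenius norm exceeds \<tau>, and it never moves G by more
than its norm, since it only shrinks singular values. As the mean has norm at most \<tau>/2, moving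
forces the deviation t = norm (G - M) above \<tau>/2, so the clipping error is at most
2 t \<le> 2 t (2 t / \<tau>) powr (\<alpha> - 1) = 2 powr \<alpha> \<tau> powr (1 - \<alpha>) t powr \<alpha>. The bias
M - E[C(G)] = E[G - C(G)] is bounded by the expected clipping error, hence by
2 powr \<alpha> \<tau> powr (1 - \<alpha>) \<sigma> powr \<alpha>; squaring gives the claim.
Because spec_clip is defined through a chosen SVD, a thin SVD must first be shown to exist:
a unit vector maximising the stretch of a matrix yields a singular pair, and deflating by it
and repeating gives the whole decomposition.\<close>

definition orthonormal_family :: "nat \<Rightarrow> (nat \<Rightarrow> 'a::real_inner) \<Rightarrow> bool" where
  "orthonormal_family d u \<longleftrightarrow> (\<forall>i<d. \<forall>j<d. u i \<bullet> u j = (if i = j then 1 else 0))"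

definition outer_prod_sum :: "nat \<Rightarrow> (nat \<Rightarrow> real) \<Rightarrow> (nat \<Rightarrow> real^'m) \<Rightarrow> (nat \<Rightarrow> real^'n) \<Rightarrow> real^'n^'m" where
  "outer_prod_sum d s u v = (\<Sum>k<d. s k *\<^sub>R outer_prod (u k) (v k))"

lemma is_thin_svd_iff:
  "is_thin_svd G u s v \<longleftrightarrow>
     orthonormal_family (min CARD('m) CARD('n)) u \<and> orthonormal_family (min CARD('m) CARD('n)) v \<and>
     (\<forall>k<min CARD('m) CARD('n). 0 \<le> s k) \<and> G = outer_prod_sum (min CARD('m) CARD('n)) s u v"
  for G :: "real^'n^'m"
  by (simp add: is_thin_svd_def orthonormal_family_def outer_prod_sum_def Let_def)

lemma orthonormal_family_Suc:
  "orthonormal_family (Suc k) (u(k := x)) \<longleftrightarrow>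
     orthonormal_family k u \<and> x \<bullet> x = 1 \<and> (\<forall>i<k. x \<bullet> u i = 0)"
  by (auto simp: orthonormal_family_def less_Suc_eq inner_commute)

lemma outer_prod_mult_vec: "outer_prod a b *v w = (b \<bullet> w) *\<^sub>R a"
  by (simp add: outer_prod_def matrix_vector_mult_def inner_vec_def vec_eq_iff sum_distrib_left ac_simps)

lemma vec_mult_outer_prod: "w v* outer_prod a b = (w \<bullet> a) *\<^sub>R b"
  unfolding outer_prod_def vector_matrix_mult_def inner_vec_def
  by (simp add: vec_eq_iff sum_distrib_left mult.commute mult.left_commute)

lemma inner_outer_prod: "outer_prod a b \<bullet> outer_prod c d = (a \<bullet> c) * (b \<bullet> d)"
proof -
  have "outer_prod a b \<bullet> outer_prod c d = (\<Sum>i\<in>UNIV. (a $ i * c $ i) * (\<Sum>j\<in>UNIV. b $ j * d $ j))"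
    by (simp add: outer_prod_def inner_vec_def sum_distrib_left mult_ac)
  then show ?thesis
    by (simp add: inner_vec_def sum_distrib_right)
qed

lemma outer_prod_sum_Suc_upd:
  "outer_prod_sum (Suc k) (s(k := c)) (u(k := x)) (v(k := y)) = outer_prod_sum k s u v + c *\<^sub>R outer_prod x y"
  by (simp add: outer_prod_sum_def)

lemma norm_outer_prod_sum:
  assumes "orthonormal_family d u" and "orthonormal_family d v"
  shows "(norm (outer_prod_sum d c u v))\<^sup>2 = (\<Sum>k<d. (c k)\<^sup>2)"
proof -
  have "(\<Sum>l<d. c l * ((u l \<bullet> u k) * (v l \<bullet> v k))) = c k" if "k < d" for k
  proof -
    have "(\<Sum>l<d. c l * ((u l \<bullet> u k) * (v l \<bullet> v k))) = (\<Sum>l<d. if l = k then c k else 0)"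
      using assms that by (intro sum.cong) (auto simp: orthonormal_family_def)
    then show ?thesis
      using that by simp
  qed
  then have "(\<Sum>k<d. c k * (\<Sum>l<d. c l * ((u l \<bullet> u k) * (v l \<bullet> v k)))) = (\<Sum>k<d. (c k)\<^sup>2)"
    by (simp add: power2_eq_square)
  then show ?thesis
    by (simp add: outer_prod_sum_def power2_norm_eq_inner inner_sum_left inner_sum_right
        inner_outer_prod ac_simps)
qed

section \<open>Existence of a thin SVD\<close>

lemma eq_scaleR_if_inner_eq_norm_bound:
  fixes w x :: "'a::real_inner"
  assumes "norm w \<le> s" and "norm x = 1" and "w \<bullet> x = s"
  shows "w = s *\<^sub>R x"
proof -
  have "s \<le> norm w"
    using norm_cauchy_schwarz[of w x] assms by simp
  then have "w \<bullet> x = norm w * norm x"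
    using assms by simp
  then have "norm w *\<^sub>R x = norm x *\<^sub>R w"
    by (simp only: norm_cauchy_schwarz_eq)
  then show ?thesis
    using assms \<open>s \<le> norm w\<close> by simp
qed

lemma exists_unit_orthogonal:
  fixes u :: "nat \<Rightarrow> 'a::euclidean_space"
  assumes "k < DIM('a)"
  obtains a where "a \<bullet> a = 1" and "\<forall>i<k. a \<bullet> u i = 0"
proof -
  have "dim (u ` {..<k}) < DIM('a)"
    using dim_le_card'[of "u ` {..<k}"] card_image_le[of "{..<k}" u] assms by simp
  then obtain b where "b \<noteq> 0" and "\<And>y. y \<in> span (u ` {..<k}) \<Longrightarrow> orthogonal b y"
    using orthogonal_to_subspace_exists by blast
  then show ?thesis
    by (intro that[of "(1 / norm b) *\<^sub>R b"])
      (auto simp: dot_square_norm power2_eq_square orthogonal_def span_base)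
qed

lemma exists_maximal_stretch:
  fixes R :: "real^'n^'m"
  obtains x where "norm x = 1" and "\<And>y. norm (R *v y) \<le> norm (R *v x) * norm y"
proof -
  have "sphere (0::real^'n) 1 \<noteq> {}"
    using vector_choose_size[of 1] by auto
  then obtain x where x: "x \<in> sphere 0 1"
    and max: "\<And>y. y \<in> sphere 0 1 \<Longrightarrow> norm (R *v y) \<le> norm (R *v x)"
    using continuous_attains_sup[OF compact_sphere, of 0 1 "\<lambda>x. norm (R *v x)"]
    by (metis continuous_on_norm matrix_vector_mult_linear_continuous_on)
  have "norm (R *v y) \<le> norm (R *v x) * norm y" for y
  proof (cases "y = 0")
    case False
    then have "norm (R *v ((1 / norm y) *\<^sub>R y)) \<le> norm (R *v x)"
      by (intro max) simp
    then show ?thesis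
      using False by (simp add: matrix_vector_mult_scaleR divide_le_eq mult.commute)
  qed simp
  with x show ?thesis
    by (intro that) simp_all
qed

lemma norm_vector_matrix_mult_le:
  fixes R :: "real^'n^'m"
  assumes "0 \<le> c" and "\<And>y. norm (R *v y) \<le> c * norm y"
  shows "norm (z v* R) \<le> c * norm z"
proof -
  let ?w = "z v* R"
  have "(norm ?w)\<^sup>2 = z \<bullet> (R *v ?w)"
    by (simp add: power2_norm_eq_inner dot_lmul_matrix del: transpose_matrix_vector)
  also have "\<dots> \<le> norm z * norm (R *v ?w)"
    by (rule norm_cauchy_schwarz)
  also have "\<dots> \<le> norm z * (c * norm ?w)"
    by (simp add: assms mult_left_mono)
  finally have "norm ?w * norm ?w \<le> (c * norm z) * norm ?w"
    by (simp add: power2_eq_square ac_simps)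
  then show ?thesis
    using assms(1) by (cases "norm ?w = 0") auto
qed

lemma singular_pair_exists:
  fixes R :: "real^'n^'m"
  assumes "k < CARD('m)" and "k < CARD('n)"
    and Rv: "\<forall>i<k. R *v v i = 0" and uR: "\<forall>i<k. u i v* R = 0"
  obtains s u0 v0 where "0 \<le> s" and "u0 \<bullet> u0 = 1" and "v0 \<bullet> v0 = 1"
    and "\<forall>i<k. u0 \<bullet> u i = 0" and "\<forall>i<k. v0 \<bullet> v i = 0"
    and "R *v v0 = s *\<^sub>R u0" and "u0 v* R = s *\<^sub>R v0"
proof -
  obtain x where x: "norm x = 1" and max: "\<And>y. norm (R *v y) \<le> norm (R *v x) * norm y"
    using exists_maximal_stretch[of R] by blast
  define s where "s = norm (R *v x)"
  have max_T: "norm (z v* R) \<le> s * norm z" for z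
    using max by (intro norm_vector_matrix_mult_le) (simp_all add: s_def)
  show ?thesis
  proof (cases "s = 0")
    case True
    obtain u0 :: "real^'m" where "u0 \<bullet> u0 = 1" "\<forall>i<k. u0 \<bullet> u i = 0"
      using exists_unit_orthogonal[of k u] assms(1) by auto
    moreover obtain v0 :: "real^'n" where "v0 \<bullet> v0 = 1" "\<forall>i<k. v0 \<bullet> v i = 0"
      using exists_unit_orthogonal[of k v] assms(2) by auto
    moreover have "R *v v0 = 0" and "u0 v* R = 0"
      using max[of v0] max_T[of u0] True by (simp_all add: s_def)
    ultimately show ?thesis
      using that[of 0 u0 v0] by simp
  next
    case False
    then have "0 < s"
      by (simp add: s_def)
    define u0 where "u0 = (1 / s) *\<^sub>R (R *v x)"
    have u0: "u0 \<bullet> u0 = 1"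
      using \<open>0 < s\<close> by (simp add: u0_def dot_square_norm power2_eq_square s_def)
    have Rx: "R *v x = s *\<^sub>R u0"
      using \<open>0 < s\<close> by (simp add: u0_def)
    \<comment> \<open>x maximises the stretch of R, so u0 v* R attains the bound s along x and must be s x.\<close>
    have u0R: "u0 v* R = s *\<^sub>R x"
    proof (rule eq_scaleR_if_inner_eq_norm_bound)
      show "norm (u0 v* R) \<le> s"
        using max_T[of u0] u0 by (simp add: norm_eq_sqrt_inner)
      show "(u0 v* R) \<bullet> x = s"
        using u0 by (simp add: dot_lmul_matrix Rx del: transpose_matrix_vector)
    qed (use x in simp)
    have "\<forall>i<k. u0 \<bullet> u i = 0"
    proof (intro allI impI)
      fix i assume "i < k"
      have "u i \<bullet> (R *v x) = (u i v* R) \<bullet> x"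
        by (rule dot_lmul_matrix[symmetric])
      then show "u0 \<bullet> u i = 0"
        using uR \<open>i < k\<close> by (simp add: u0_def inner_commute)
    qed
    moreover have "\<forall>i<k. x \<bullet> v i = 0"
    proof (intro allI impI)
      fix i assume "i < k"
      have "s * (x \<bullet> v i) = u0 \<bullet> (R *v v i)"
        using dot_lmul_matrix[of u0 R "v i"] by (simp add: u0R del: transpose_matrix_vector)
      then show "x \<bullet> v i = 0"
        using Rv \<open>i < k\<close> \<open>0 < s\<close> by simp
    qed
    ultimately show ?thesis
      using that[of s u0 x] \<open>0 < s\<close> u0 x Rx u0R by (simp add: dot_square_norm)
  qed
qed

lemma partial_svd_exists:
  fixes G :: "real^'n^'m"
  assumes "k \<le> min CARD('m) CARD('n)"
  shows "\<exists>s u v. orthonormal_family k u \<and> orthonormal_family k v \<and> (\<forall>i<k. 0 \<le> s i) \<and>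
           (\<forall>i<k. (G - outer_prod_sum k s u v) *v v i = 0 \<and> u i v* (G - outer_prod_sum k s u v) = 0)"
  using assms
proof (induction k)
  case 0
  then show ?case
    by (simp add: orthonormal_family_def)
next
  case (Suc k)
  then obtain s u v where u: "orthonormal_family k u" and v: "orthonormal_family k v"
    and s: "\<forall>i<k. 0 \<le> s i"
    and ann: "\<forall>i<k. (G - outer_prod_sum k s u v) *v v i = 0 \<and> u i v* (G - outer_prod_sum k s u v) = 0"
    by auto
  define R where "R = G - outer_prod_sum k s u v"
  obtain c x y where "0 \<le> c" and x: "x \<bullet> x = 1" and y: "y \<bullet> y = 1"
    and xu: "\<forall>i<k. x \<bullet> u i = 0" and yv: "\<forall>i<k. y \<bullet> v i = 0"
    and Ry: "R *v y = c *\<^sub>R x" and xR: "x v* R = c *\<^sub>R y"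
    using singular_pair_exists[of k R v u] ann Suc.prems by (auto simp: R_def)
  define R' where "R' = G - outer_prod_sum (Suc k) (s(k := c)) (u(k := x)) (v(k := y))"
  have R': "R' = R - c *\<^sub>R outer_prod x y"
    by (simp add: R'_def outer_prod_sum_Suc_upd R_def)
  have "R' *v (v(k := y)) i = 0" if "i < Suc k" for i
    using that ann yv y Ry
    by (auto simp: R' less_Suc_eq R_def matrix_vector_mult_diff_rdistrib
        scaleR_matrix_vector_assoc[symmetric] outer_prod_mult_vec inner_commute)
  moreover have "(u(k := x)) i v* R' = 0" if "i < Suc k" for i
    using that ann xu x xR
    by (auto simp: R' less_Suc_eq R_def vector_matrix_mult_diff_rdistrib vector_scaleR_matrix_ac
        vec_mult_outer_prod inner_commute simp del: transpose_matrix_vector)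
  moreover have "orthonormal_family (Suc k) (u(k := x))" and "orthonormal_family (Suc k) (v(k := y))"
    using u v x y xu yv by (simp_all add: orthonormal_family_Suc)
  moreover have "\<forall>i<Suc k. 0 \<le> (s(k := c)) i"
    using s \<open>0 \<le> c\<close> by (simp add: less_Suc_eq)
  ultimately show ?case
    unfolding R'_def by blast
qed

lemma span_orthonormal_family:
  fixes w :: "nat \<Rightarrow> 'a::euclidean_space"
  assumes "orthonormal_family DIM('a) w"
  shows "span (w ` {..<DIM('a)}) = UNIV"
proof -
  have "inj_on w {..<DIM('a)}"
    using assms by (intro inj_onI) (metis lessThan_iff orthonormal_family_def zero_neq_one)
  moreover have "0 \<notin> w ` {..<DIM('a)}"
    using assms by (auto simp: orthonormal_family_def) (metis inner_zero_left zero_neq_one)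
  then have "independent (w ` {..<DIM('a)})"
    using assms by (intro pairwise_orthogonal_independent)
      (auto simp: pairwise_def orthogonal_def orthonormal_family_def)
  ultimately show ?thesis
    using card_ge_dim_independent[of "w ` {..<DIM('a)}" UNIV] by (auto simp: card_image dim_UNIV)
qed

lemma matrix_eq_0_if_orthonormal_kernel:
  fixes A :: "real^'n^'m"
  assumes "orthonormal_family CARD('n) w" and "\<forall>i<CARD('n). A *v w i = 0"
  shows "A = 0"
proof -
  have "span (w ` {..<CARD('n)}) = UNIV"
    using span_orthonormal_family[of w] assms(1) by simp
  then have "A *v x = 0" for x
    using real_vector.linear_eq_0_on_span[of "\<lambda>x. A *v x" "w ` {..<CARD('n)}"] assms(2) by auto
  then show ?thesis
    by (simp add: matrix_eq)
qed

lemma thin_svd_exists: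
  fixes G :: "real^'n^'m"
  shows "\<exists>u s v. is_thin_svd G u s v"
proof -
  define d where "d = min CARD('m) CARD('n)"
  obtain s u v where u: "orthonormal_family d u" and v: "orthonormal_family d v" and s: "\<forall>i<d. 0 \<le> s i"
    and R: "\<forall>i<d. (G - outer_prod_sum d s u v) *v v i = 0 \<and> u i v* (G - outer_prod_sum d s u v) = 0"
    using partial_svd_exists[of d G] by (auto simp: d_def)
  have "G - outer_prod_sum d s u v = 0"
  proof (cases "d = CARD('n)")
    case True
    then show ?thesis
      by (intro matrix_eq_0_if_orthonormal_kernel[OF v[unfolded True]]) (use R True in simp)
  next
    case False
    then have "d = CARD('m)"
      by (simp add: d_def min_def split: if_splits)
    then have "transpose (G - outer_prod_sum d s u v) = 0"
      by (intro matrix_eq_0_if_orthonormal_kernel[of u]) (use u R in simp_all)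
    moreover have "transpose (0 :: real^'m^'n) = 0"
      by (simp add: transpose_def vec_eq_iff)
    ultimately show ?thesis
      by (metis transpose_transpose)
  qed
  then show ?thesis
    using u v s by (auto simp: is_thin_svd_iff d_def)
qed

section \<open>Spectral clipping\<close>

lemma spec_clip_thin_svd:
  fixes G :: "real^'n^'m"
  obtains u s v where "is_thin_svd G u s v"
    and "spec_clip \<tau> G = outer_prod_sum (min CARD('m) CARD('n)) (\<lambda>k. min (s k) \<tau>) u v"
proof -
  obtain u s v where uv: "(SOME (u, s, v). is_thin_svd G u s v) = (u, s, v)"
    by (metis prod_cases3)
  have "is_thin_svd G u s v"
    using someI_ex[of "\<lambda>(u, s, v). is_thin_svd G u s v"] thin_svd_exists[of G] uv by auto
  moreover have "spec_clip \<tau> G = outer_prod_sum (min CARD('m) CARD('n)) (\<lambda>k. min (s k) \<tau>) u v"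
    by (simp add: spec_clip_def uv outer_prod_sum_def)
  ultimately show ?thesis
    by (rule that)
qed

lemma singular_value_le_norm:
  fixes G :: "real^'n^'m"
  assumes "is_thin_svd G u s v" and "k < min CARD('m) CARD('n)"
  shows "s k \<le> norm G"
proof -
  have "(s k)\<^sup>2 \<le> (\<Sum>l<min CARD('m) CARD('n). (s l)\<^sup>2)"
    using assms(2) by (intro member_le_sum) auto
  also have "\<dots> = (norm G)\<^sup>2"
    using assms(1) norm_outer_prod_sum[of _ u v s] by (simp add: is_thin_svd_iff)
  finally show ?thesis
    by (rule power2_le_imp_le) simp
qed

lemma norm_diff_spec_clip_le:
  fixes G :: "real^'n^'m"
  assumes "0 \<le> \<tau>"
  shows "norm (G - spec_clip \<tau> G) \<le> norm G"
proof -
  define d where "d = min CARD('m) CARD('n)"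
  obtain u s v where svd: "is_thin_svd G u s v"
    and clip: "spec_clip \<tau> G = outer_prod_sum d (\<lambda>k. min (s k) \<tau>) u v"
    unfolding d_def by (rule spec_clip_thin_svd)
  then have u: "orthonormal_family d u" and v: "orthonormal_family d v"
    and s: "\<forall>k<d. 0 \<le> s k" and G: "G = outer_prod_sum d s u v"
    by (simp_all add: is_thin_svd_iff d_def)
  have "G - spec_clip \<tau> G = outer_prod_sum d (\<lambda>k. s k - min (s k) \<tau>) u v"
    by (subst G) (simp add: clip outer_prod_sum_def sum_subtractf scaleR_diff_left)
  then have "(norm (G - spec_clip \<tau> G))\<^sup>2 = (\<Sum>k<d. (s k - min (s k) \<tau>)\<^sup>2)"
    using norm_outer_prod_sum[OF u v] by simp
  also have "\<dots> \<le> (\<Sum>k<d. (s k)\<^sup>2)"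
    using s assms by (intro sum_mono power_mono) auto
  also have "\<dots> = (norm G)\<^sup>2"
    using norm_outer_prod_sum[OF u v] G by simp
  finally show ?thesis
    by (rule power2_le_imp_le) simp
qed

lemma spec_clip_eq_self:
  fixes G :: "real^'n^'m"
  assumes "norm G \<le> \<tau>"
  shows "spec_clip \<tau> G = G"
proof -
  obtain u s v where svd: "is_thin_svd G u s v"
    and clip: "spec_clip \<tau> G = outer_prod_sum (min CARD('m) CARD('n)) (\<lambda>k. min (s k) \<tau>) u v"
    by (rule spec_clip_thin_svd)
  have "min (s k) \<tau> = s k" if "k < min CARD('m) CARD('n)" for k
    using singular_value_le_norm[OF svd that] assms by simp
  then have "spec_clip \<tau> G = outer_prod_sum (min CARD('m) CARD('n)) s u v"
    unfolding clip outer_prod_sum_def by (intro sum.cong) simp_all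
  then show ?thesis
    using svd by (simp add: is_thin_svd_iff)
qed

lemma two_mul_le_powr:
  fixes t \<tau> \<alpha> :: real
  assumes "0 < \<tau>" and "\<tau> \<le> 2 * t" and "1 \<le> \<alpha>"
  shows "2 * t \<le> 2 powr \<alpha> * \<tau> powr (1 - \<alpha>) * t powr \<alpha>"
proof -
  have "0 < t"
    using assms by simp
  have "2 * t \<le> 2 * t * (2 * t / \<tau>) powr (\<alpha> - 1)"
    using assms \<open>0 < t\<close> by (simp add: ge_one_powr_ge_zero)
  also have "\<dots> = 2 powr \<alpha> * \<tau> powr (1 - \<alpha>) * t powr \<alpha>"
    using assms \<open>0 < t\<close>
    by (simp add: powr_divide powr_mult powr_diff powr_minus_divide[of \<tau> "\<alpha> - 1", simplified])
  finally show ?thesis .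
qed

lemma norm_diff_spec_clip_le_powr:
  fixes G M :: "real^'n^'m"
  assumes "0 < \<tau>" and "1 \<le> \<alpha>" and "norm M \<le> \<tau> / 2"
  shows "norm (G - spec_clip \<tau> G) \<le> 2 powr \<alpha> * \<tau> powr (1 - \<alpha>) * norm (G - M) powr \<alpha>"
proof (cases "norm G \<le> \<tau>")
  case True
  then show ?thesis
    by (simp add: spec_clip_eq_self)
next
  case False
  have "norm G \<le> norm (G - M) + norm M"
    using norm_triangle_ineq[of "G - M" M] by simp
  then have "norm (G - spec_clip \<tau> G) \<le> 2 * norm (G - M)" and "\<tau> \<le> 2 * norm (G - M)"
    using norm_diff_spec_clip_le[of \<tau> G] assms False by linarith+
  then show ?thesis
    using two_mul_le_powr assms by fastforce
qed

lemma norm_integral_le_nn_integral_bound: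
  fixes D :: "'a \<Rightarrow> 'b::{banach, second_countable_topology}"
  assumes "integrable P D" and "f \<in> borel_measurable P" and "\<And>\<omega>. 0 \<le> f \<omega>"
    and "0 \<le> K" and "\<And>\<omega>. norm (D \<omega>) \<le> K * f \<omega>"
    and "(\<integral>\<^sup>+ \<omega>. ennreal (f \<omega>) \<partial>P) \<le> ennreal c" and "0 \<le> c"
  shows "norm (integral\<^sup>L P D) \<le> K * c"
proof -
  have "ennreal (norm (integral\<^sup>L P D)) \<le> (\<integral>\<^sup>+ \<omega>. ennreal (norm (D \<omega>)) \<partial>P)"
    using integral_norm_bound_ennreal[OF assms(1)] by simp
  also have "\<dots> \<le> (\<integral>\<^sup>+ \<omega>. ennreal K * ennreal (f \<omega>) \<partial>P)"
    using assms by (intro nn_integral_mono) (simp add: ennreal_mult[symmetric])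
  also have "\<dots> = ennreal K * (\<integral>\<^sup>+ \<omega>. ennreal (f \<omega>) \<partial>P)"
    using assms(2) by (intro nn_integral_cmult) simp
  also have "\<dots> \<le> ennreal (K * c)"
    using assms by (simp add: ennreal_mult mult_left_mono)
  finally show ?thesis
    using assms by (simp add: ennreal_le_iff)
qed

theorem mainTheorem7:
  fixes P :: "'a measure"
    and G :: "'a \<Rightarrow> real^'n^'m"
    and M :: "real^'n^'m"
    and \<alpha> \<sigma> \<tau> :: real
  assumes "prob_space P"
    and "integrable P G"
    and "M = prob_space.expectation P G"
    and "1 < \<alpha>" and "\<alpha> \<le> 2" and "0 < \<sigma>"
    and "(\<integral>\<^sup>+ \<omega>. ennreal (norm (G \<omega> - M) powr \<alpha>) \<partial>P) \<le> ennreal (\<sigma> powr \<alpha>)"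
    and "0 < \<tau>"
    and "norm M \<le> \<tau> / 2"
    and "integrable P (\<lambda>\<omega>. spec_clip \<tau> (G \<omega>))"
  shows "(norm (M - prob_space.expectation P (\<lambda>\<omega>. spec_clip \<tau> (G \<omega>))))\<^sup>2
           \<le> 2 powr (2 * \<alpha>) * \<tau> powr (- 2 * (\<alpha> - 1)) * \<sigma> powr (2 * \<alpha>)
       \<and> 2 powr (2 * \<alpha>) * \<tau> powr (- 2 * (\<alpha> - 1)) * \<sigma> powr (2 * \<alpha>)
           \<le> 16 * \<tau> powr (- 2 * (\<alpha> - 1)) * \<sigma> powr (2 * \<alpha>)"
proof -
  \<comment> \<open>The argument uses only integrability: the bound holds for any measure P.\<close>
  define K where "K = 2 powr \<alpha> * \<tau> powr (1 - \<alpha>)"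
  have bias: "M - integral\<^sup>L P (\<lambda>\<omega>. spec_clip \<tau> (G \<omega>)) = integral\<^sup>L P (\<lambda>\<omega>. G \<omega> - spec_clip \<tau> (G \<omega>))"
    using assms(2,3,10) by simp
  have "norm (integral\<^sup>L P (\<lambda>\<omega>. G \<omega> - spec_clip \<tau> (G \<omega>))) \<le> K * \<sigma> powr \<alpha>"
  proof (rule norm_integral_le_nn_integral_bound)
    show "(\<lambda>\<omega>. norm (G \<omega> - M) powr \<alpha>) \<in> borel_measurable P"
      using borel_measurable_integrable[OF assms(2)] by measurable
    show "norm (G \<omega> - spec_clip \<tau> (G \<omega>)) \<le> K * norm (G \<omega> - M) powr \<alpha>" for \<omega>
      unfolding K_def using assms(4,8,9) by (intro norm_diff_spec_clip_le_powr) simp_all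
  qed (use assms(2,7,10) in \<open>simp_all add: K_def\<close>)
  then have "(norm (M - integral\<^sup>L P (\<lambda>\<omega>. spec_clip \<tau> (G \<omega>))))\<^sup>2 \<le> (K * \<sigma> powr \<alpha>)\<^sup>2"
    unfolding bias by (intro power_mono) simp_all
  also have "(K * \<sigma> powr \<alpha>)\<^sup>2 = 2 powr (2 * \<alpha>) * \<tau> powr (- 2 * (\<alpha> - 1)) * \<sigma> powr (2 * \<alpha>)"
    using assms(6,8) by (simp add: K_def power_mult_distrib powr_power algebra_simps)
  finally have "(norm (M - integral\<^sup>L P (\<lambda>\<omega>. spec_clip \<tau> (G \<omega>))))\<^sup>2
      \<le> 2 powr (2 * \<alpha>) * \<tau> powr (- 2 * (\<alpha> - 1)) * \<sigma> powr (2 * \<alpha>)" .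
  moreover have "2 powr (2 * \<alpha>) \<le> (2::real) powr (4::real)"
    using assms(5) by (intro powr_mono) simp_all
  ultimately show ?thesis
    by (simp add: mult_right_mono)
qed

end
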